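(* Let $(f,\bar{f})\colon (G,P_G)\to (H,P_H)$ be a regular epimorphism in $\mathsf{PreOrdGrp}$ (i.e. both $f\colon G\to H$ and $\bar f\colon P_G\to P_H$ are surjective). The following conditions are equivalent: (1) (i) $\mathsf{Ker}(f)\subseteq Z(G)$ (the center of $G$), and (ii) for all $a,b,c\in P_G$ with $\eta_G(a)=\eta_G(b)$ and $f(b)=f(c)$, one has $a-b+c\in P_G$; (2) $(f,\bar f)$ is a $\Gamma_C$-normal extension.
   Context: A preordered group is a pair $(G,P_G)$ where $G$ is a group (written additively, not necessarily abelian) and $P_G\subseteq G$ is a submonoid closed under conjugation in $G$ (the positive cone). A morphism $(f,\bar f)\colon (G,P_G)\to(H,P_H)$ is a group homomorphism $f\colon G\to H$ with $f(P_G)\subseteq P_H$, $\bar f$ being its restriction $P_G\to P_H$. This gives the category $\mathsf{PreOrdGrp}$; $\mathsf{PreOrdAb}$ is its full subcategory of those $(G,P_G)$ with $G$ abelian. Limits in $\mathsf{PreOrdGrp}$ are computed componentwise (e.g. the pullback of $(f,\bar f)$ and $(g,\bar g)$ is the pair of the group pullback and the monoid pullback of the positive cones), and the regular (= normal = effective descent) epimorphisms are exactly the morphisms $(f,\bar f)$ with both $f$ and $\bar f$ surjective. For a group $G$, $\eta_G\colon G\to G/[G,G]$ is the abelianization quotient. The functor $C\colon\mathsf{PreOrdGrp}\to\mathsf{PreOrdAb}$, $C(G,P_G)=(G/[G,G],\eta_G(P_G))$, is left adjoint to the inclusion $V$, with unit $(\eta_G,\bar\eta_G)$, $\bar\eta_G\colon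 P_G\to\eta_G(P_G)$ the restriction. A morphism $(f,\bar f)\colon X\to Y$ which is a regular epimorphism is a $\Gamma_C$-trivial extension if the naturality square formed by $(f,\bar f)$, the units $X\to VC(X)$, $Y\to VC(Y)$ and $VC(f,\bar f)$ is a pullback in $\mathsf{PreOrdGrp}$. A regular epimorphism $(f,\bar f)$ is a $\Gamma_C$-normal extension if the first projection of its kernel pair $(\pi_1,\bar\pi_1)\colon (Eq(f),Eq(\bar f))\to (G,P_G)$ is a $\Gamma_C$-trivial extension, where $Eq(f)=\{(x,y)\in G\times G: f(x)=f(y)\}$ and $Eq(\bar f)=Eq(f)\cap(P_G\times P_G)$. *)

theory Defs
  imports "HOL-Algebra.Algebra"
begin

text \<open>Preordered groups (G, P): G a group (HOL-Algebra, written multiplicatively here;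
  the paper writes it additively), P a submonoid of G closed under conjugation.\<close>

definition preord_grp :: "('a, 'm) monoid_scheme \<Rightarrow> 'a set \<Rightarrow> bool" where
  "preord_grp G P \<longleftrightarrow> group G \<and> P \<subseteq> carrier G \<and> \<one>\<^bsub>G\<^esub> \<in> P
     \<and> (\<forall>x\<in>P. \<forall>y\<in>P. x \<otimes>\<^bsub>G\<^esub> y \<in> P)
     \<and> (\<forall>g\<in>carrier G. \<forall>p\<in>P. g \<otimes>\<^bsub>G\<^esub> p \<otimes>\<^bsub>G\<^esub> inv\<^bsub>G\<^esub> g \<in> P)"

definition preord_mor :: "('a, 'm) monoid_scheme \<Rightarrow> 'a set \<Rightarrow> ('b, 'n) monoid_scheme \<Rightarrow> 'b set
    \<Rightarrow> ('a \<Rightarrow> 'b) \<Rightarrow> bool" where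
  "preord_mor G P H Q f \<longleftrightarrow> f \<in> hom G H \<and> f ` P \<subseteq> Q"

definition regular_epi :: "('a, 'm) monoid_scheme \<Rightarrow> 'a set \<Rightarrow> ('b, 'n) monoid_scheme \<Rightarrow> 'b set
    \<Rightarrow> ('a \<Rightarrow> 'b) \<Rightarrow> bool" where
  "regular_epi G P H Q f \<longleftrightarrow> preord_mor G P H Q f \<and> f ` carrier G = carrier H \<and> f ` P = Q"

definition center :: "('a, 'm) monoid_scheme \<Rightarrow> 'a set" where
  "center G = {z \<in> carrier G. \<forall>g\<in>carrier G. z \<otimes>\<^bsub>G\<^esub> g = g \<otimes>\<^bsub>G\<^esub> z}"

text \<open>Abelianization quotient map \<eta>_G : G \<rightarrow> G/[G,G]  (G Mod derived G (carrier G)).\<close>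
definition eta :: "('a, 'm) monoid_scheme \<Rightarrow> 'a \<Rightarrow> 'a set" where
  "eta G x = derived G (carrier G) #>\<^bsub>G\<^esub> x"

text \<open>Gamma_C-trivial extension: (f, fbar) is a regular epimorphism and the naturality square
  with the units and VC(f) is a pullback in PreOrdGrp. Since limits are computed componentwise,
  this means: the square of groups is a pullback of groups and the square of positive cones
  is a pullback of monoids. VC(f) sends eta_G(g) to eta_H(f g); we quantify over representatives g.
  Pullback = for every compatible pair there is a unique element mapping to it.\<close>
definition trivial_ext :: "('a, 'm) monoid_scheme \<Rightarrow> 'a set \<Rightarrow> ('b, 'n) monoid_scheme \<Rightarrow> 'b set
    \<Rightarrow> ('a \<Rightarrow> 'b) \<Rightarrow> bool" where
  "trivial_ext G P H Q f \<longleftrightarrow> regular_epi G P H Q f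
     \<and> (\<forall>h\<in>carrier H. \<forall>g\<in>carrier G. eta H h = eta H (f g) \<longrightarrow>
          (\<exists>!x. x \<in> carrier G \<and> f x = h \<and> eta G x = eta G g))
     \<and> (\<forall>q\<in>Q. \<forall>p\<in>P. eta H q = eta H (f p) \<longrightarrow>
          (\<exists>!x. x \<in> P \<and> f x = q \<and> eta G x = eta G p))"

definition kernel_pair_grp :: "('a, 'm) monoid_scheme \<Rightarrow> ('a \<Rightarrow> 'b) \<Rightarrow> ('a \<times> 'a) monoid" where
  "kernel_pair_grp G f = (G \<times>\<times> G)\<lparr>carrier := {(x, y). x \<in> carrier G \<and> y \<in> carrier G \<and> f x = f y}\<rparr>"

definition kernel_pair_cone :: "'a set \<Rightarrow> ('a \<Rightarrow> 'b) \<Rightarrow> ('a \<times> 'a) set" where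
  "kernel_pair_cone P f = {(x, y). x \<in> P \<and> y \<in> P \<and> f x = f y}"

definition normal_ext :: "('a, 'm) monoid_scheme \<Rightarrow> 'a set \<Rightarrow> ('b, 'n) monoid_scheme \<Rightarrow> 'b set
    \<Rightarrow> ('a \<Rightarrow> 'b) \<Rightarrow> bool" where
  "normal_ext G P H Q f \<longleftrightarrow> regular_epi G P H Q f
     \<and> trivial_ext (kernel_pair_grp G f) (kernel_pair_cone P f) G P fst"

end

(*
  Write K = Eq(f) and D = [K, K] \<subseteq> G \<times> G, so that the unit of K identifies pairs modulo D.
  Given a \<in> G and (b, c) \<in> K with \<eta>(a) = \<eta>(b), the pair (a, a - b + c) always lies over a and
  is congruent to (b, c) modulo D, because their difference (a - b, a - b) is a diagonal
  commutator. The group square is a pullback iff this lift is unique, i.e. iff D contains no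
  nontrivial (0, z). For k \<in> Ker f the commutator of (0, k) and (g, g) is (0, [k, g]), so
  uniqueness forces Ker f to be central; conversely a central kernel makes every commutator of
  K diagonal. On positive cones the unique lift must moreover lie in P \<times> P, which is
  condition (ii).
*)
theory Submission
  imports Defs
begin

lemma (in group) eta_eq_iff:
  assumes "x \<in> carrier G" "y \<in> carrier G"
  shows "eta G x = eta G y \<longleftrightarrow> x \<otimes> inv y \<in> derived G (carrier G)"
proof -
  have D: "subgroup (derived G (carrier G)) G"
    by (rule derived_is_subgroup) simp
  have "eta G x = eta G y \<longleftrightarrow> x \<in> derived G (carrier G) #> y"
    unfolding eta_def using repr_independence[OF _ assms(2) D] rcos_self[OF assms(1) D] by auto
  also have "\<dots> \<longleftrightarrow> x \<otimes> inv y \<in> derived G (carrier G)"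
    using subgroup.rcos_module[OF D is_group assms(2,1)] .
  finally show ?thesis .
qed

lemma (in group) eta_subgroup_eq_iff:
  assumes "subgroup S G" "x \<in> S" "y \<in> S"
  shows "eta (G\<lparr>carrier := S\<rparr>) x = eta (G\<lparr>carrier := S\<rparr>) y \<longleftrightarrow> x \<otimes> inv y \<in> derived G S"
  using group.eta_eq_iff[OF subgroup.subgroup_is_group[OF assms(1) is_group], of x y] assms
    derived_consistent[OF subset_refl assms(1)] m_inv_consistent[OF assms(1)]
  by simp

lemma (in group) commutator_mult_central:
  assumes "x \<in> carrier G" "y \<in> carrier G" "k \<in> center G" "l \<in> center G"
  shows "(x \<otimes> k) \<otimes> (y \<otimes> l) \<otimes> inv (x \<otimes> k) \<otimes> inv (y \<otimes> l) = x \<otimes> y \<otimes> inv x \<otimes> inv y"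
proof -
  have kl: "k \<in> carrier G" "l \<in> carrier G" using assms(3,4) by (auto simp: center_def)
  have k_comm: "k \<otimes> (y \<otimes> l) = (y \<otimes> l) \<otimes> k" and l_comm: "l \<otimes> inv x = inv x \<otimes> l"
    using assms by (auto simp: center_def)
  have "(x \<otimes> k) \<otimes> (y \<otimes> l) \<otimes> inv (x \<otimes> k) \<otimes> inv (y \<otimes> l)
      = x \<otimes> (k \<otimes> (y \<otimes> l)) \<otimes> inv k \<otimes> inv x \<otimes> inv l \<otimes> inv y"
    using assms(1,2) kl by (simp add: inv_mult_group m_assoc)
  also have "\<dots> = x \<otimes> y \<otimes> (l \<otimes> inv x) \<otimes> inv l \<otimes> inv y"
    unfolding k_comm using assms(1,2) kl by (simp add: m_assoc)
  also have "\<dots> = x \<otimes> y \<otimes> inv x \<otimes> inv y"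
    unfolding l_comm using assms(1,2) kl by (simp add: m_assoc)
  finally show ?thesis .
qed

lemma (in group) commute_if_commutator_one:
  assumes "x \<in> carrier G" "y \<in> carrier G" "x \<otimes> y \<otimes> inv x \<otimes> inv y = \<one>"
  shows "x \<otimes> y = y \<otimes> x"
proof -
  have "x \<otimes> y \<otimes> inv x \<otimes> inv y \<otimes> y \<otimes> x = y \<otimes> x" using assms by simp
  thus ?thesis using assms by (simp add: m_assoc)
qed

lemma carrier_kernel_pair_grp:
  "carrier (kernel_pair_grp G f) = {(x, y). x \<in> carrier G \<and> y \<in> carrier G \<and> f x = f y}"
  by (simp add: kernel_pair_grp_def)

lemma kernel_pair_grp_eq: "kernel_pair_grp G f = (G \<times>\<times> G)\<lparr>carrier := carrier (kernel_pair_grp G f)\<rparr>"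
  by (simp add: kernel_pair_grp_def)

lemma regular_epi_kernel_pair_fst:
  assumes "P \<subseteq> carrier G"
  shows "regular_epi (kernel_pair_grp G f) (kernel_pair_cone P f) G P fst"
proof -
  have "fst \<in> hom (kernel_pair_grp G f) G"
    by (auto simp: hom_def kernel_pair_grp_def)
  moreover have "fst ` kernel_pair_cone P f = P"
    by (force simp: kernel_pair_cone_def)
  moreover have "fst ` carrier (kernel_pair_grp G f) = carrier G"
    by (force simp: carrier_kernel_pair_grp)
  ultimately show ?thesis by (simp add: regular_epi_def preord_mor_def)
qed

context group_hom
begin

abbreviation kernel_pairs :: "('a \<times> 'a) set"
  where "kernel_pairs \<equiv> carrier (kernel_pair_grp G h)"

abbreviation derived_kernel_pairs :: "('a \<times> 'a) set"
  where "derived_kernel_pairs \<equiv> derived (G \<times>\<times> G) kernel_pairs"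

lemma group_DirProd_self: "group (G \<times>\<times> G)"
  by (simp add: DirProd_group G.is_group)

lemma kernel_pairs_subgroup: "subgroup kernel_pairs (G \<times>\<times> G)"
proof (rule group.subgroupI[OF group_DirProd_self])
  fix a b assume "a \<in> kernel_pairs" "b \<in> kernel_pairs"
  then show "a \<otimes>\<^bsub>G \<times>\<times> G\<^esub> b \<in> kernel_pairs" by (auto simp: carrier_kernel_pair_grp)
qed (auto simp: carrier_kernel_pair_grp)

lemma eta_kernel_pair_grp_eq_iff:
  assumes "(x, y) \<in> kernel_pairs" "(x', y') \<in> kernel_pairs"
  shows "eta (kernel_pair_grp G h) (x, y) = eta (kernel_pair_grp G h) (x', y')
    \<longleftrightarrow> (x \<otimes> inv x', y \<otimes> inv y') \<in> derived_kernel_pairs"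
proof -
  have "x' \<in> carrier G" "y' \<in> carrier G"
    using assms(2) by (auto simp: carrier_kernel_pair_grp)
  then have "(x, y) \<otimes>\<^bsub>G \<times>\<times> G\<^esub> inv\<^bsub>G \<times>\<times> G\<^esub> (x', y') = (x \<otimes> inv x', y \<otimes> inv y')"
    by (simp add: G.is_group)
  then show ?thesis
    using group.eta_subgroup_eq_iff[OF group_DirProd_self kernel_pairs_subgroup assms]
    by (simp flip: kernel_pair_grp_eq)
qed

lemma diagonal_mem_derived_kernel_pairs:
  assumes "c \<in> derived G (carrier G)"
  shows "(c, c) \<in> derived_kernel_pairs"
proof -
  have diag: "group_hom G (G \<times>\<times> G) (\<lambda>x. (x, x))"
    by (rule group_hom.intro[OF G.is_group group_DirProd_self]) (auto simp: group_hom_axioms_def hom_def)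
  have "(\<lambda>x. (x, x)) ` derived G (carrier G) = derived (G \<times>\<times> G) ((\<lambda>x. (x, x)) ` carrier G)"
    using group_hom.derived_img[OF diag] by simp
  also have "\<dots> \<subseteq> derived_kernel_pairs"
    by (rule group.mono_derived[OF group_DirProd_self]) (auto simp: carrier_kernel_pair_grp)
  finally show ?thesis using assms by auto
qed

lemma commutator_mem_derived_kernel_pairs:
  assumes "k \<in> kernel G H h" "g \<in> carrier G"
  shows "(\<one>, k \<otimes> g \<otimes> inv k \<otimes> inv g) \<in> derived_kernel_pairs"
proof -
  have k: "k \<in> carrier G" "h k = \<one>\<^bsub>H\<^esub>" using assms(1) by (auto simp: kernel_def)
  have "(\<one>, k) \<in> kernel_pairs" "(g, g) \<in> kernel_pairs"
    using k assms(2) by (auto simp: carrier_kernel_pair_grp)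
  moreover have "(\<one>, k \<otimes> g \<otimes> inv k \<otimes> inv g) = (\<one>, k) \<otimes>\<^bsub>G \<times>\<times> G\<^esub> (g, g)
      \<otimes>\<^bsub>G \<times>\<times> G\<^esub> inv\<^bsub>G \<times>\<times> G\<^esub> (\<one>, k) \<otimes>\<^bsub>G \<times>\<times> G\<^esub> inv\<^bsub>G \<times>\<times> G\<^esub> (g, g)"
    using k assms(2) by (simp add: G.is_group)
  ultimately have "(\<one>, k \<otimes> g \<otimes> inv k \<otimes> inv g) \<in> derived_set (G \<times>\<times> G) kernel_pairs"
    by blast
  then show ?thesis unfolding derived_def by (rule generate.incl)
qed

lemma diagonal_subgroup: "subgroup (Id_on (carrier G)) (G \<times>\<times> G)"
  by (rule group.subgroupI[OF group_DirProd_self]) (auto simp: G.is_group)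

text \<open>A central kernel makes the kernel pair the product of the diagonal with the central
  subgroup \<open>1 \<times> Ker h\<close>, whose commutators are therefore diagonal.\<close>

lemma derived_kernel_pairs_diagonal:
  assumes "kernel G H h \<subseteq> center G"
  shows "derived_kernel_pairs \<subseteq> Id_on (carrier G)"
  unfolding derived_def
proof (rule group.generate_subgroup_incl[OF group_DirProd_self _ diagonal_subgroup], rule subsetI)
  fix z assume "z \<in> derived_set (G \<times>\<times> G) kernel_pairs"
  then obtain x y x' y' where pairs: "(x, x') \<in> kernel_pairs" "(y, y') \<in> kernel_pairs"
    and z: "z = (x, x') \<otimes>\<^bsub>G \<times>\<times> G\<^esub> (y, y')
      \<otimes>\<^bsub>G \<times>\<times> G\<^esub> inv\<^bsub>G \<times>\<times> G\<^esub> (x, x') \<otimes>\<^bsub>G \<times>\<times> G\<^esub> inv\<^bsub>G \<times>\<times> G\<^esub> (y, y')"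
    by auto
  have carr: "x \<in> carrier G" "x' \<in> carrier G" "y \<in> carrier G" "y' \<in> carrier G"
    using pairs by (auto simp: carrier_kernel_pair_grp)
  have central: "inv x \<otimes> x' \<in> center G" "inv y \<otimes> y' \<in> center G"
    using pairs assms by (auto simp: carrier_kernel_pair_grp kernel_def)
  have "x' \<otimes> y' \<otimes> inv x' \<otimes> inv y'
      = (x \<otimes> (inv x \<otimes> x')) \<otimes> (y \<otimes> (inv y \<otimes> y')) \<otimes> inv (x \<otimes> (inv x \<otimes> x')) \<otimes> inv (y \<otimes> (inv y \<otimes> y'))"
    using carr by (simp add: G.m_assoc[symmetric])
  also have "\<dots> = x \<otimes> y \<otimes> inv x \<otimes> inv y"
    using G.commutator_mult_central carr central by blast
  finally show "z \<in> Id_on (carrier G)" using z carr by (simp add: G.is_group Id_on_iff)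
qed

lemma kernel_pair_lift_mem:
  assumes "a \<in> carrier G" "(b, c) \<in> kernel_pairs"
  shows "(a, a \<otimes> inv b \<otimes> c) \<in> kernel_pairs"
  using assms by (auto simp: carrier_kernel_pair_grp H.m_assoc)

lemma eta_kernel_pair_lift:
  assumes "a \<in> carrier G" "(b, c) \<in> kernel_pairs" "eta G a = eta G b"
  shows "eta (kernel_pair_grp G h) (a, a \<otimes> inv b \<otimes> c) = eta (kernel_pair_grp G h) (b, c)"
proof -
  have carr: "b \<in> carrier G" "c \<in> carrier G" using assms(2) by (auto simp: carrier_kernel_pair_grp)
  have "a \<otimes> inv b \<in> derived G (carrier G)"
    using G.eta_eq_iff assms(1,3) carr by blast
  moreover have "a \<otimes> inv b \<otimes> c \<otimes> inv c = a \<otimes> inv b"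
    using assms(1) carr by (simp add: G.m_assoc)
  ultimately show ?thesis
    using eta_kernel_pair_grp_eq_iff[OF kernel_pair_lift_mem[OF assms(1,2)] assms(2)]
      diagonal_mem_derived_kernel_pairs by simp
qed

lemma kernel_pair_lift_unique:
  assumes "kernel G H h \<subseteq> center G" "(a, y) \<in> kernel_pairs" "(a, y') \<in> kernel_pairs"
    and "eta (kernel_pair_grp G h) (a, y) = eta (kernel_pair_grp G h) (a, y')"
  shows "y = y'"
proof -
  have carr: "a \<in> carrier G" "y \<in> carrier G" "y' \<in> carrier G"
    using assms(2,3) by (auto simp: carrier_kernel_pair_grp)
  have "(\<one>, y \<otimes> inv y') \<in> derived_kernel_pairs"
    using eta_kernel_pair_grp_eq_iff[OF assms(2,3)] assms(4) carr by simp
  then have "y \<otimes> inv y' = \<one>"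
    using derived_kernel_pairs_diagonal[OF assms(1)] by auto
  then show ?thesis using G.inv_solve_right[OF G.one_closed carr(2,3)] carr by simp
qed

lemma kernel_central_if_unique_lift:
  assumes unique: "\<forall>a\<in>carrier G. \<forall>x\<in>kernel_pairs. eta G a = eta G (fst x) \<longrightarrow>
      (\<exists>!y. y \<in> kernel_pairs \<and> fst y = a \<and> eta (kernel_pair_grp G h) y = eta (kernel_pair_grp G h) x)"
  shows "kernel G H h \<subseteq> center G"
proof
  fix k assume k: "k \<in> kernel G H h"
  then have k_carr: "k \<in> carrier G" by (simp add: kernel_def)
  have "k \<otimes> g = g \<otimes> k" if g: "g \<in> carrier G" for g
  proof -
    let ?c = "k \<otimes> g \<otimes> inv k \<otimes> inv g"
    have D: "(\<one>, ?c) \<in> derived_kernel_pairs" using commutator_mem_derived_kernel_pairs k g .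
    have pairs: "(\<one>, ?c) \<in> kernel_pairs" "(\<one>, \<one>) \<in> kernel_pairs"
      using k g by (auto simp: carrier_kernel_pair_grp kernel_def)
    have "(\<one> \<otimes> inv \<one>, ?c \<otimes> inv \<one>) \<in> derived_kernel_pairs"
      using D k_carr g by simp
    then have "eta (kernel_pair_grp G h) (\<one>, ?c) = eta (kernel_pair_grp G h) (\<one>, \<one>)"
      using eta_kernel_pair_grp_eq_iff[OF pairs] by blast
    moreover have "\<exists>!y. y \<in> kernel_pairs \<and> fst y = \<one>
        \<and> eta (kernel_pair_grp G h) y = eta (kernel_pair_grp G h) (\<one>, \<one>)"
      using unique pairs(2) by simp
    ultimately have "(\<one>, ?c) = (\<one>, \<one>)"
      using pairs by (metis fst_conv)
    then show ?thesis using G.commute_if_commutator_one[OF k_carr g] by simp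
  qed
  then show "k \<in> center G" using k_carr by (simp add: center_def)
qed

lemma unique_lift_kernel_pairs:
  assumes central: "kernel G H h \<subseteq> center G"
    and a: "a \<in> carrier G" and bc: "(b, c) \<in> kernel_pairs" and eta_a: "eta G a = eta G b"
  shows "\<exists>!y. y \<in> kernel_pairs \<and> fst y = a \<and> eta (kernel_pair_grp G h) y = eta (kernel_pair_grp G h) (b, c)"
proof (rule ex1I[of _ "(a, a \<otimes> inv b \<otimes> c)"])
  show "(a, a \<otimes> inv b \<otimes> c) \<in> kernel_pairs \<and> fst (a, a \<otimes> inv b \<otimes> c) = a
      \<and> eta (kernel_pair_grp G h) (a, a \<otimes> inv b \<otimes> c) = eta (kernel_pair_grp G h) (b, c)"
    using kernel_pair_lift_mem[OF a bc] eta_kernel_pair_lift[OF a bc eta_a] by simp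
next
  fix y assume y: "y \<in> kernel_pairs \<and> fst y = a
    \<and> eta (kernel_pair_grp G h) y = eta (kernel_pair_grp G h) (b, c)"
  then obtain y' where y': "y = (a, y')" by (metis prod.collapse)
  have "y' = a \<otimes> inv b \<otimes> c"
    using kernel_pair_lift_unique[OF central _ kernel_pair_lift_mem[OF a bc]]
      eta_kernel_pair_lift[OF a bc eta_a] y y' by simp
  then show "y = (a, a \<otimes> inv b \<otimes> c)" using y' by simp
qed

lemma unique_lift_kernel_pairs_iff_kernel_central:
  "(\<forall>a\<in>carrier G. \<forall>x\<in>kernel_pairs. eta G a = eta G (fst x) \<longrightarrow>
      (\<exists>!y. y \<in> kernel_pairs \<and> fst y = a \<and> eta (kernel_pair_grp G h) y = eta (kernel_pair_grp G h) x))
    \<longleftrightarrow> kernel G H h \<subseteq> center G"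
proof
  assume "kernel G H h \<subseteq> center G"
  then show "\<forall>a\<in>carrier G. \<forall>x\<in>kernel_pairs. eta G a = eta G (fst x) \<longrightarrow>
      (\<exists>!y. y \<in> kernel_pairs \<and> fst y = a \<and> eta (kernel_pair_grp G h) y = eta (kernel_pair_grp G h) x)"
    using unique_lift_kernel_pairs by (simp add: split_paired_all)
qed (rule kernel_central_if_unique_lift)

lemma kernel_pair_cone_subset: "P \<subseteq> carrier G \<Longrightarrow> kernel_pair_cone P h \<subseteq> kernel_pairs"
  by (auto simp: kernel_pair_cone_def carrier_kernel_pair_grp)

lemma unique_lift_kernel_pair_cone_iff:
  assumes P: "P \<subseteq> carrier G" and central: "kernel G H h \<subseteq> center G"
  shows "(\<forall>a\<in>P. \<forall>x\<in>kernel_pair_cone P h. eta G a = eta G (fst x) \<longrightarrow>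
      (\<exists>!y. y \<in> kernel_pair_cone P h \<and> fst y = a
        \<and> eta (kernel_pair_grp G h) y = eta (kernel_pair_grp G h) x))
    \<longleftrightarrow> (\<forall>a\<in>P. \<forall>b\<in>P. \<forall>c\<in>P. eta G a = eta G b \<and> h b = h c \<longrightarrow> a \<otimes> inv b \<otimes> c \<in> P)"
    (is "?unique \<longleftrightarrow> ?closed")
proof -
  have lift: "(a, a \<otimes> inv b \<otimes> c) \<in> kernel_pairs
      \<and> eta (kernel_pair_grp G h) (a, a \<otimes> inv b \<otimes> c) = eta (kernel_pair_grp G h) (b, c)
      \<and> (\<exists>!y. y \<in> kernel_pairs \<and> fst y = a
          \<and> eta (kernel_pair_grp G h) y = eta (kernel_pair_grp G h) (b, c))"
    if "a \<in> P" "(b, c) \<in> kernel_pair_cone P h" "eta G a = eta G b" for a b c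
  proof -
    have a: "a \<in> carrier G" and bc: "(b, c) \<in> kernel_pairs"
      using that(1,2) P kernel_pair_cone_subset[OF P] by auto
    show ?thesis
      using kernel_pair_lift_mem[OF a bc] eta_kernel_pair_lift[OF a bc that(3)]
        unique_lift_kernel_pairs[OF central a bc that(3)]
      by (intro conjI)
  qed
  have cone: "(a, y) \<in> kernel_pair_cone P h \<longleftrightarrow> (a, y) \<in> kernel_pairs \<and> a \<in> P \<and> y \<in> P" for a y
    using P by (auto simp: kernel_pair_cone_def carrier_kernel_pair_grp)
  show ?thesis
  proof
    assume ?unique
    show ?closed
    proof (intro ballI impI)
      fix a b c assume abc: "a \<in> P" "b \<in> P" "c \<in> P" and eqs: "eta G a = eta G b \<and> h b = h c"
      have bc: "(b, c) \<in> kernel_pair_cone P h" using abc eqs by (simp add: kernel_pair_cone_def)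
      have "\<exists>!y. y \<in> kernel_pair_cone P h \<and> fst y = a
          \<and> eta (kernel_pair_grp G h) y = eta (kernel_pair_grp G h) (b, c)"
        using \<open>?unique\<close> abc(1) bc eqs by simp
      then obtain y where y: "(a, y) \<in> kernel_pair_cone P h"
          "eta (kernel_pair_grp G h) (a, y) = eta (kernel_pair_grp G h) (b, c)"
        by (metis prod.collapse)
      then have "(a, y) = (a, a \<otimes> inv b \<otimes> c)"
        using lift[OF abc(1) bc] eqs cone by (metis fst_conv)
      then show "a \<otimes> inv b \<otimes> c \<in> P" using y(1) cone by simp
    qed
  next
    assume closed: ?closed
    show ?unique
    proof (intro ballI impI)
      fix a x assume a: "a \<in> P" and x: "x \<in> kernel_pair_cone P h" and eta_a: "eta G a = eta G (fst x)"
      obtain b c where bc: "x = (b, c)" by fastforce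
      have "a \<otimes> inv b \<otimes> c \<in> P"
        using closed a x eta_a bc by (simp add: kernel_pair_cone_def)
      then have lift_cone: "(a, a \<otimes> inv b \<otimes> c) \<in> kernel_pair_cone P h"
        using lift[of a b c] a x eta_a bc cone by simp
      show "\<exists>!y. y \<in> kernel_pair_cone P h \<and> fst y = a
          \<and> eta (kernel_pair_grp G h) y = eta (kernel_pair_grp G h) x"
      proof (rule ex1I[of _ "(a, a \<otimes> inv b \<otimes> c)"])
        show "(a, a \<otimes> inv b \<otimes> c) \<in> kernel_pair_cone P h \<and> fst (a, a \<otimes> inv b \<otimes> c) = a
          \<and> eta (kernel_pair_grp G h) (a, a \<otimes> inv b \<otimes> c) = eta (kernel_pair_grp G h) x"
          using lift_cone lift[of a b c] a x eta_a bc by simp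
      next
        fix y assume "y \<in> kernel_pair_cone P h \<and> fst y = a
          \<and> eta (kernel_pair_grp G h) y = eta (kernel_pair_grp G h) x"
        then show "y = (a, a \<otimes> inv b \<otimes> c)"
          using lift[of a b c] a x eta_a bc kernel_pair_cone_subset[OF P] by (metis fst_conv subsetD)
      qed
    qed
  qed
qed

lemma trivial_ext_kernel_pair_fst_iff:
  assumes P: "P \<subseteq> carrier G"
  shows "trivial_ext (kernel_pair_grp G h) (kernel_pair_cone P h) G P fst
    \<longleftrightarrow> kernel G H h \<subseteq> center G
      \<and> (\<forall>a\<in>P. \<forall>b\<in>P. \<forall>c\<in>P. eta G a = eta G b \<and> h b = h c \<longrightarrow> a \<otimes> inv b \<otimes> c \<in> P)"
  unfolding trivial_ext_def unique_lift_kernel_pairs_iff_kernel_central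
  using regular_epi_kernel_pair_fst[where f = h, OF P] conj_cong[OF refl unique_lift_kernel_pair_cone_iff[OF P]]
  by (simp only: simp_thms)

end

theorem theorem2p9:
  fixes G :: "'a monoid" and H :: "'b monoid" and P :: "'a set" and Q :: "'b set"
    and f :: "'a \<Rightarrow> 'b"
  assumes "preord_grp G P" and "preord_grp H Q"
    and "regular_epi G P H Q f"
  shows "(kernel G H f \<subseteq> center G
          \<and> (\<forall>a\<in>P. \<forall>b\<in>P. \<forall>c\<in>P. eta G a = eta G b \<and> f b = f c
                \<longrightarrow> a \<otimes>\<^bsub>G\<^esub> inv\<^bsub>G\<^esub> b \<otimes>\<^bsub>G\<^esub> c \<in> P))
         \<longleftrightarrow> normal_ext G P H Q f"
proof -
  have P: "P \<subseteq> carrier G" using assms(1) by (simp add: preord_grp_def)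
  interpret group_hom G H f
    using assms by (simp add: group_hom_def group_hom_axioms_def preord_grp_def regular_epi_def preord_mor_def)
  show ?thesis
    unfolding normal_ext_def trivial_ext_kernel_pair_fst_iff[OF P] using assms(3) by (simp only: simp_thms)
qed

end
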